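(* Let $p_1,\dots,p_n$ be distinct primes and $G=C_{p_1\cdots p_n}$ the cyclic group of order $p_1\cdots p_n$. Then the width of $G$ equals $n$.
   Context: For a finite group $G$, an arrow is a pair $(H,K)$ of subgroups with $H\leqslant K$; identity arrows are those with $H=K$. A $G$-transfer system is a set of arrows containing all identities and closed under composition ($(H,K),(K,L)\Rightarrow(H,L)$), conjugation ($(H,K)\Rightarrow(gHg^{-1},gKg^{-1})$) and restriction ($(H,K)$ and $L\leqslant K\Rightarrow(H\cap L,L)$). For a set $S$ of non-identity arrows, $\langle S\rangle$ is the smallest transfer system containing $S$. A minimal generating set of a transfer system $\mathsf{T}$ is a set $S\subseteq\mathsf{T}$ of non-identity arrows with $\langle S\rangle=\mathsf{T}$ and $\langle S\setminus\{s\}\rangle\neq\mathsf{T}$ for all $s\in S$; all such sets have the same cardinality $\mathfrak{m}(\mathsf{T})$. The width of $G$ is $\mathfrak{m}$ of the complete transfer system (the transfer system consisting of all arrows). *)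

theory Defs
  imports "HOL-Algebra.Algebra" "HOL-Computational_Algebra.Primes"
begin

definition arrows :: "('a, 'b) monoid_scheme \<Rightarrow> ('a set \<times> 'a set) set" where
  "arrows G = {(H, K). subgroup H G \<and> subgroup K G \<and> H \<subseteq> K}"

definition conj_set :: "('a, 'b) monoid_scheme \<Rightarrow> 'a \<Rightarrow> 'a set \<Rightarrow> 'a set" where
  "conj_set G g H = (\<lambda>h. g \<otimes>\<^bsub>G\<^esub> h \<otimes>\<^bsub>G\<^esub> inv\<^bsub>G\<^esub> g) ` H"

definition transfer_system :: "('a, 'b) monoid_scheme \<Rightarrow> ('a set \<times> 'a set) set \<Rightarrow> bool" where
  "transfer_system G T \<longleftrightarrow>
     T \<subseteq> arrows G \<and>
     (\<forall>H. subgroup H G \<longrightarrow> (H, H) \<in> T) \<and>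
     (\<forall>H K L. (H, K) \<in> T \<and> (K, L) \<in> T \<longrightarrow> (H, L) \<in> T) \<and>
     (\<forall>H K g. (H, K) \<in> T \<and> g \<in> carrier G \<longrightarrow> (conj_set G g H, conj_set G g K) \<in> T) \<and>
     (\<forall>H K L. (H, K) \<in> T \<and> subgroup L G \<and> L \<subseteq> K \<longrightarrow> (H \<inter> L, L) \<in> T)"

definition generated_ts :: "('a, 'b) monoid_scheme \<Rightarrow> ('a set \<times> 'a set) set \<Rightarrow> ('a set \<times> 'a set) set" where
  "generated_ts G S = \<Inter>{T. transfer_system G T \<and> S \<subseteq> T}"

definition minimal_generating_set ::
  "('a, 'b) monoid_scheme \<Rightarrow> ('a set \<times> 'a set) set \<Rightarrow> ('a set \<times> 'a set) set \<Rightarrow> bool" where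
  "minimal_generating_set G S T \<longleftrightarrow>
     S \<subseteq> T \<and> (\<forall>(H, K) \<in> S. H \<noteq> K) \<and> generated_ts G S = T \<and>
     (\<forall>s \<in> S. generated_ts G (S - {s}) \<noteq> T)"

text \<open>m(T): the (common) cardinality of minimal generating sets of T.\<close>
definition mgen :: "('a, 'b) monoid_scheme \<Rightarrow> ('a set \<times> 'a set) set \<Rightarrow> nat" where
  "mgen G T = card (SOME S. minimal_generating_set G S T)"

definition width :: "('a, 'b) monoid_scheme \<Rightarrow> nat" where
  "width G = mgen G (arrows G)"

end

theory Submission
  imports Defs "HOL-Computational_Algebra.Squarefree"
begin

text \<open>In a cyclic group of squarefree order \<open>N\<close>, subgroups correspond to divisors of \<open>N\<close> under
  reverse divisibility, and the maximal subgroups are the subgroups \<open>M\<^sub>p\<close> of index \<open>p\<close>, for the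
  primes \<open>p\<close> dividing \<open>N\<close>. Every proper inclusion \<open>H \<subset> K\<close> is separated by some \<open>M\<^sub>p\<close>, so
  restricting \<open>(M\<^sub>p, G)\<close> to \<open>K\<close> and composing shows that the arrows \<open>(M\<^sub>p, G)\<close> generate the
  complete transfer system. Conversely, since \<open>M\<^sub>p\<close> is normal and maximal, deleting the single
  arrow \<open>(M\<^sub>p, G)\<close> from the complete transfer system leaves a transfer system. Hence each of these
  arrows lies in every generating set, and together they form the unique minimal one.\<close>

lemma squarefree_dvdI:
  fixes d e :: "'a :: factorial_semiring"
  assumes "squarefree d" "e \<noteq> 0" "\<And>q. Factorial_Ring.prime q \<Longrightarrow> q dvd d \<Longrightarrow> q dvd e"
  shows "d dvd e"
proof (rule multiplicity_le_imp_dvd)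
  show "d \<noteq> 0" using assms(1) by auto
  fix q :: 'a assume q: "Factorial_Ring.prime q"
  show "multiplicity q d \<le> multiplicity q e"
  proof (cases "q dvd d")
    case True
    then have "multiplicity q d \<le> 1"
      using assms(1) q \<open>d \<noteq> 0\<close> squarefree_factorial_semiring'' by blast
    also have "1 \<le> multiplicity q e"
      using q assms(2) assms(3)[OF q True] by (intro multiplicity_geI) auto
    finally show ?thesis .
  qed (simp add: not_dvd_imp_multiplicity_0)
qed

lemma squarefree_prod_distinct_primes:
  fixes p :: "'a \<Rightarrow> 'b :: factorial_semiring_gcd"
  assumes "\<And>i. i \<in> A \<Longrightarrow> Factorial_Ring.prime (p i)" "inj_on p A"
  shows "squarefree (prod p A)"
  using assms by (intro squarefree_prod_coprime squarefree_prime primes_coprime) (auto dest: inj_onD)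

lemma prime_factors_prod_distinct_primes:
  fixes p :: "'a \<Rightarrow> nat"
  assumes "finite A" "\<And>i. i \<in> A \<Longrightarrow> Factorial_Ring.prime (p i)"
  shows "prime_factors (prod p A) = p ` A"
proof -
  have "0 \<notin> p ` A" using assms(2) by (metis imageE not_prime_0)
  then show ?thesis using assms by (auto simp: prime_factors_prod prime_prime_factors)
qed

lemma conj_set_eq_coset: "conj_set G g H = (g <#\<^bsub>G\<^esub> H) #>\<^bsub>G\<^esub> inv\<^bsub>G\<^esub> g"
  unfolding conj_set_def l_coset_def r_coset_def by (simp add: image_image UNION_singleton_eq_range)

lemma (in group) subgroup_conj_set:
  assumes "subgroup H G" "g \<in> carrier G"
  shows "subgroup (conj_set G g H) G"
  using subgroup_conjugation_is_surj1[of "inv g" H] assms by (simp add: conj_set_eq_coset)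

lemma (in group) conj_set_inj:
  assumes "g \<in> carrier G" "H \<subseteq> carrier G" "K \<subseteq> carrier G"
  shows "conj_set G g H = conj_set G g K \<longleftrightarrow> H = K"
  using subgroup_conjugation_is_inj[OF assms] by (auto simp: conj_set_eq_coset)

lemma (in group) conj_set_normal:
  assumes N: "N \<lhd> G" and g: "g \<in> carrier G"
  shows "conj_set G g N = N"
proof
  show "conj_set G g N \<subseteq> N"
    using normal.inv_op_closed2[OF N g] unfolding conj_set_def by blast
  show "N \<subseteq> conj_set G g N"
  proof
    fix h assume h: "h \<in> N"
    then have "h \<in> carrier G" using normal_imp_subgroup[OF N] by (rule subgroup.mem_carrier[rotated])
    then have "h = g \<otimes> (inv g \<otimes> h \<otimes> g) \<otimes> inv g" using g by (simp only: conjugation_is_surj)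
    moreover have "inv g \<otimes> h \<otimes> g \<in> N" using normal.inv_op_closed1[OF N g h] .
    ultimately show "h \<in> conj_set G g N" unfolding conj_set_def by blast
  qed
qed

lemma transfer_system_subset_arrows: "transfer_system G T \<Longrightarrow> T \<subseteq> arrows G"
  unfolding transfer_system_def by (elim conjE)

lemma transfer_system_arrowsD:
  assumes "transfer_system G T" "(H, K) \<in> T"
  shows "subgroup H G" "subgroup K G" "H \<subseteq> K"
proof -
  have "(H, K) \<in> arrows G" using transfer_system_subset_arrows[OF assms(1)] assms(2) by (rule subsetD)
  then show "subgroup H G" "subgroup K G" "H \<subseteq> K" by (simp_all add: arrows_def)
qed

lemma transfer_system_refl: "transfer_system G T \<Longrightarrow> subgroup H G \<Longrightarrow> (H, H) \<in> T"
  by (simp add: transfer_system_def)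

lemma transfer_system_trans:
  assumes "transfer_system G T" "(H, K) \<in> T" "(K, L) \<in> T"
  shows "(H, L) \<in> T"
proof -
  have "\<forall>H K L. (H, K) \<in> T \<and> (K, L) \<in> T \<longrightarrow> (H, L) \<in> T"
    using assms(1) unfolding transfer_system_def by (elim conjE)
  then show ?thesis using assms(2,3) by blast
qed

lemma transfer_system_conj:
  assumes "transfer_system G T" "(H, K) \<in> T" "g \<in> carrier G"
  shows "(conj_set G g H, conj_set G g K) \<in> T"
proof -
  have "\<forall>H K g. (H, K) \<in> T \<and> g \<in> carrier G \<longrightarrow> (conj_set G g H, conj_set G g K) \<in> T"
    using assms(1) unfolding transfer_system_def by (elim conjE)
  then show ?thesis using assms(2,3) by blast
qed

lemma transfer_system_restrict:
  assumes "transfer_system G T" "(H, K) \<in> T" "subgroup L G" "L \<subseteq> K"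
  shows "(H \<inter> L, L) \<in> T"
proof -
  have "\<forall>H K L. (H, K) \<in> T \<and> subgroup L G \<and> L \<subseteq> K \<longrightarrow> (H \<inter> L, L) \<in> T"
    using assms(1) unfolding transfer_system_def by (elim conjE)
  then show ?thesis using assms(2-4) by blast
qed

lemma (in group) transfer_system_arrows: "transfer_system G (arrows G)"
  unfolding transfer_system_def
proof (intro conjI allI impI)
  show "(conj_set G g H, conj_set G g K) \<in> arrows G"
    if "(H, K) \<in> arrows G \<and> g \<in> carrier G" for H K g
    using that subgroup_conj_set[of H g] subgroup_conj_set[of K g]
    by (auto simp: arrows_def conj_set_def)
  show "(H \<inter> L, L) \<in> arrows G" if "(H, K) \<in> arrows G \<and> subgroup L G \<and> L \<subseteq> K" for H K L
    using that by (auto simp: arrows_def subgroup_Int)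
qed (auto simp: arrows_def)

lemma (in group) transfer_system_arrows_Diff_maximal:
  assumes M: "M \<lhd> G" "M \<noteq> carrier G"
    and maximal: "\<And>K. subgroup K G \<Longrightarrow> M \<subseteq> K \<Longrightarrow> K = M \<or> K = carrier G"
  shows "transfer_system G (arrows G - {(M, carrier G)})"
  unfolding transfer_system_def
proof (intro conjI allI impI)
  let ?s = "(M, carrier G)"
  have A: "transfer_system G (arrows G)" by (rule transfer_system_arrows)
  have sub: "H \<subseteq> carrier G" "K \<subseteq> carrier G" if "(H, K) \<in> arrows G" for H K
    using transfer_system_arrowsD[OF A that] by (simp_all add: subgroup.subset)
  show "arrows G - {?s} \<subseteq> arrows G" by blast
  show "(H, H) \<in> arrows G - {?s}" if "subgroup H G" for H
    using that M(2) by (simp add: arrows_def)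
  show "(H, L) \<in> arrows G - {?s}" if "(H, K) \<in> arrows G - {?s} \<and> (K, L) \<in> arrows G - {?s}" for H K L
  proof -
    from that have HK: "(H, K) \<in> arrows G" "(H, K) \<noteq> ?s" and KL: "(K, L) \<in> arrows G" "(K, L) \<noteq> ?s"
      by auto
    have "(H, L) \<noteq> ?s"
    proof
      assume "(H, L) = ?s"
      then have "H = M" "L = carrier G" by simp_all
      then have "K = M \<or> K = carrier G" using maximal HK(1) by (simp add: arrows_def)
      then show False using HK(2) KL(2) \<open>H = M\<close> \<open>L = carrier G\<close> by blast
    qed
    then show ?thesis using transfer_system_trans[OF A HK(1) KL(1)] by blast
  qed
  show "(conj_set G g H, conj_set G g K) \<in> arrows G - {?s}"
    if "(H, K) \<in> arrows G - {?s} \<and> g \<in> carrier G" for H K g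
  proof -
    from that have HK: "(H, K) \<in> arrows G" "(H, K) \<noteq> ?s" and g: "g \<in> carrier G" by auto
    have "(conj_set G g H, conj_set G g K) \<noteq> ?s"
    proof
      assume "(conj_set G g H, conj_set G g K) = ?s"
      then have "conj_set G g H = conj_set G g M" "conj_set G g K = conj_set G g (carrier G)"
        using conj_set_normal[OF M(1) g] conj_set_normal[OF normal_self g] by simp_all
      moreover have "M \<subseteq> carrier G" using normal_imp_subgroup[OF M(1)] by (rule subgroup.subset)
      ultimately have "H = M" "K = carrier G"
        using conj_set_inj[OF g] sub[OF HK(1)] by simp_all
      then show False using HK(2) by blast
    qed
    then show ?thesis using transfer_system_conj[OF A HK(1) g] by blast
  qed
  show "(H \<inter> L, L) \<in> arrows G - {?s}"
    if "(H, K) \<in> arrows G - {?s} \<and> subgroup L G \<and> L \<subseteq> K" for H K L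
  proof -
    from that have HK: "(H, K) \<in> arrows G" "(H, K) \<noteq> ?s" and L: "subgroup L G" "L \<subseteq> K" by auto
    have "(H \<inter> L, L) \<noteq> ?s"
    proof
      assume "(H \<inter> L, L) = ?s"
      then have "H \<inter> L = M" "L = carrier G" by auto
      then have "K = carrier G" "H = M" using sub[OF HK(1)] L(2) by blast+
      then show False using HK(2) by blast
    qed
    then show ?thesis using transfer_system_restrict[OF A HK(1) L] by blast
  qed
qed

lemma generated_ts_least: "transfer_system G T \<Longrightarrow> S \<subseteq> T \<Longrightarrow> generated_ts G S \<subseteq> T"
  unfolding generated_ts_def by blast

lemma generated_ts_mono: "S \<subseteq> S' \<Longrightarrow> generated_ts G S \<subseteq> generated_ts G S'"
  unfolding generated_ts_def by blast

lemma subset_generated_ts: "S \<subseteq> generated_ts G S"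
  unfolding generated_ts_def by blast

lemma subset_generated_tsI:
  "(\<And>T. transfer_system G T \<Longrightarrow> S \<subseteq> T \<Longrightarrow> A \<subseteq> T) \<Longrightarrow> A \<subseteq> generated_ts G S"
  unfolding generated_ts_def by blast

text \<open>For \<open>H \<subset> K\<close> separated by \<open>M\<close>, restricting \<open>(M, G)\<close> to \<open>K\<close> gives \<open>(M \<inter> K, K)\<close> with
  \<open>H \<subseteq> M \<inter> K \<subset> K\<close>, so induction on \<open>|K|\<close> applies.\<close>

lemma (in group) arrows_subset_transfer_system:
  assumes fin: "finite (carrier G)" and T: "transfer_system G T"
    and top: "\<And>M. M \<in> \<M> \<Longrightarrow> (M, carrier G) \<in> T"
    and separating: "\<And>H K. subgroup H G \<Longrightarrow> subgroup K G \<Longrightarrow> H \<subset> K \<Longrightarrow>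
      \<exists>M \<in> \<M>. H \<subseteq> M \<and> \<not> K \<subseteq> M"
  shows "arrows G \<subseteq> T"
proof -
  have "(H, K) \<in> T" if "subgroup H G" "subgroup K G" "H \<subseteq> K" for H K
    using that
  proof (induction "card K" arbitrary: H K rule: less_induct)
    case less
    show ?case
    proof (cases "H = K")
      case True
      then show ?thesis using T less.prems(1) by (simp add: transfer_system_refl)
    next
      case False
      then obtain M where M: "M \<in> \<M>" "H \<subseteq> M" "\<not> K \<subseteq> M"
        using separating less.prems by blast
      have "subgroup M G" using transfer_system_arrowsD(1)[OF T top[OF M(1)]] .
      then have MK: "subgroup (M \<inter> K) G" using less.prems(2) by (rule subgroup_Int)
      have "finite K" using fin less.prems(2) subgroup.subset finite_subset by blast
      then have "card (M \<inter> K) < card K" using M(3) by (intro psubset_card_mono) auto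
      then have "(H, M \<inter> K) \<in> T" using less.hyps less.prems(1) MK M(2) less.prems(3) by blast
      moreover have "(M \<inter> K, K) \<in> T"
        using transfer_system_restrict[OF T top[OF M(1)] less.prems(2)] less.prems(2)
        by (simp add: subgroup.subset)
      ultimately show ?thesis using T by (rule transfer_system_trans[rotated])
    qed
  qed
  then show ?thesis unfolding arrows_def by auto
qed

lemma minimal_generating_set_unique:
  assumes T: "transfer_system G T" and generates: "generated_ts G S\<^sub>0 = T"
    and indispensable: "\<And>s. s \<in> S\<^sub>0 \<Longrightarrow> transfer_system G (T - {s})"
  shows "minimal_generating_set G S T \<longleftrightarrow> S = S\<^sub>0"
proof -
  have S0_in_every_generating_set: "s \<in> S"
    if "S \<subseteq> T" "generated_ts G S = T" "s \<in> S\<^sub>0" for S s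
  proof (rule ccontr)
    assume "s \<notin> S"
    then have "generated_ts G S \<subseteq> T - {s}"
      using that(1) by (intro generated_ts_least indispensable[OF that(3)]) blast
    then show False using that subset_generated_ts[of S\<^sub>0 G] generates by blast
  qed
  have S0_sub: "S\<^sub>0 \<subseteq> T" using subset_generated_ts[of S\<^sub>0 G] generates by simp
  have non_identity: "H \<noteq> K" if "(H, K) \<in> S\<^sub>0" for H K
  proof
    assume "H = K"
    have "subgroup H G" using transfer_system_arrowsD(1)[OF T] that S0_sub by blast
    then have "(H, H) \<in> T - {(H, K)}" by (rule transfer_system_refl[OF indispensable[OF that]])
    then show False using \<open>H = K\<close> by blast
  qed
  show ?thesis
  proof
    assume S: "minimal_generating_set G S T"
    then have S_gen: "S \<subseteq> T" "generated_ts G S = T"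
      and S_min: "\<And>s. s \<in> S \<Longrightarrow> generated_ts G (S - {s}) \<noteq> T"
      unfolding minimal_generating_set_def by auto
    have "S\<^sub>0 \<subseteq> S" using S0_in_every_generating_set[OF S_gen] by blast
    moreover have "s \<in> S\<^sub>0" if "s \<in> S" for s
    proof (rule ccontr)
      assume "s \<notin> S\<^sub>0"
      then have "T \<subseteq> generated_ts G (S - {s})"
        using generates generated_ts_mono[of S\<^sub>0 "S - {s}"] \<open>S\<^sub>0 \<subseteq> S\<close> by blast
      moreover have "generated_ts G (S - {s}) \<subseteq> T" using S_gen(1) T by (intro generated_ts_least) auto
      ultimately show False using S_min[OF that] by blast
    qed
    ultimately show "S = S\<^sub>0" by blast
  next
    assume "S = S\<^sub>0"
    moreover have "generated_ts G (S\<^sub>0 - {s}) \<noteq> T" if "s \<in> S\<^sub>0" for s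
      using S0_in_every_generating_set[of "S\<^sub>0 - {s}" s] S0_sub that by blast
    moreover have "\<forall>(H, K) \<in> S\<^sub>0. H \<noteq> K" using non_identity by blast
    ultimately show "minimal_generating_set G S T"
      unfolding minimal_generating_set_def using S0_sub generates by blast
  qed
qed

lemma mgen_eq_card:
  assumes "transfer_system G T" "generated_ts G S\<^sub>0 = T"
    "\<And>s. s \<in> S\<^sub>0 \<Longrightarrow> transfer_system G (T - {s})"
  shows "mgen G T = card S\<^sub>0"
  unfolding mgen_def using minimal_generating_set_unique[OF assms] by simp

locale finite_cyclic_group = group G for G (structure) +
  fixes g
  assumes generator_closed: "g \<in> carrier G"
    and carrier_eq_generate: "carrier G = generate G {g}"
    and finite_carrier: "finite (carrier G)"
begin

lemma carrier_eq_powers: "carrier G = range (\<lambda>k::nat. g [^] k)"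
  using generate_pow_on_finite_carrier[OF finite_carrier generator_closed] carrier_eq_generate
  by auto

lemma ord_generator: "ord g = order G"
  using generate_pow_card[OF generator_closed] carrier_eq_generate by (simp add: order_def)

lemma order_pos: "0 < order G"
  using finite_carrier by (simp add: order_gt_0_iff_finite)

lemma pow_generator_eq_one_iff: "g [^] (k::nat) = \<one> \<longleftrightarrow> order G dvd k"
  using pow_eq_id[OF generator_closed] by (simp add: ord_generator)

lemma pow_generator_eq_iff: "g [^] (a::nat) = g [^] (b::nat) \<longleftrightarrow> a mod order G = b mod order G"
proof -
  have "g [^] a = g [^] b \<longleftrightarrow> g [^] int a = g [^] int b" by (simp add: int_pow_int)
  also have "\<dots> \<longleftrightarrow> int (order G) dvd int b - int a"
    using int_pow_eq[OF generator_closed] by (simp add: ord_generator)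
  also have "\<dots> \<longleftrightarrow> a mod order G = b mod order G"
    by (metis mod_eq_dvd_iff of_nat_eq_iff zmod_int)
  finally show ?thesis .
qed

lemma is_comm_group: "comm_group G"
proof (rule group_comm_groupI)
  fix x y assume "x \<in> carrier G" "y \<in> carrier G"
  then obtain a b :: nat where "x = g [^] a" "y = g [^] b" using carrier_eq_powers by blast
  then show "x \<otimes> y = y \<otimes> x" using generator_closed by (simp add: nat_pow_mult add.commute)
qed

text \<open>Every subgroup is generated by a power of \<open>g\<close>; \<open>gen_exp H\<close> is the least such exponent.\<close>

definition gen_exp :: "'a set \<Rightarrow> nat" where
  "gen_exp H = (LEAST k. 0 < k \<and> g [^] k \<in> H)"

lemma
  assumes H: "subgroup H G"
  shows gen_exp_pos: "0 < gen_exp H"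
    and pow_generator_mem_iff: "g [^] k \<in> H \<longleftrightarrow> gen_exp H dvd k"
proof -
  have "0 < order G \<and> g [^] order G \<in> H"
    using order_pos pow_generator_eq_one_iff[of "order G"] subgroup.one_closed[OF H] by simp
  then have least: "0 < gen_exp H \<and> g [^] gen_exp H \<in> H"
    unfolding gen_exp_def by (rule LeastI)
  then show "0 < gen_exp H" ..
  let ?d = "gen_exp H"
  have multiple_mem: "g [^] (?d * m) \<in> H" for m
  proof -
    have "(g [^] ?d) [^] int m \<in> H" using subgroup_int_pow_closed[OF H] least by blast
    then show ?thesis using generator_closed by (simp add: int_pow_int nat_pow_pow)
  qed
  show "g [^] k \<in> H \<longleftrightarrow> ?d dvd k"
  proof
    assume "?d dvd k"
    then show "g [^] k \<in> H" using multiple_mem by (elim dvdE) simp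
  next
    assume k: "g [^] k \<in> H"
    have "g [^] k = g [^] (?d * (k div ?d)) \<otimes> g [^] (k mod ?d)"
      using generator_closed by (simp add: nat_pow_mult)
    then have "g [^] (k mod ?d) = inv (g [^] (?d * (k div ?d))) \<otimes> g [^] k"
      using generator_closed by (simp add: m_assoc[symmetric])
    then have "g [^] (k mod ?d) \<in> H"
      using k multiple_mem H by (simp add: subgroup.m_closed subgroup.m_inv_closed)
    moreover have "k mod ?d < ?d" using least by simp
    then have "\<not> (0 < k mod ?d \<and> g [^] (k mod ?d) \<in> H)"
      unfolding gen_exp_def by (rule not_less_Least)
    ultimately show "?d dvd k" by auto
  qed
qed

lemma gen_exp_dvd_order: "subgroup H G \<Longrightarrow> gen_exp H dvd order G"
  using pow_generator_mem_iff[of H "order G"] pow_generator_eq_one_iff[of "order G"]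
  by (simp add: subgroup.one_closed)

lemma gen_exp_carrier: "gen_exp (carrier G) = 1"
  using pow_generator_mem_iff[OF subgroup_self, of 1] generator_closed by simp

lemma subgroup_subset_iff:
  assumes H: "subgroup H G" and K: "subgroup K G"
  shows "H \<subseteq> K \<longleftrightarrow> gen_exp K dvd gen_exp H"
proof
  assume "H \<subseteq> K"
  then show "gen_exp K dvd gen_exp H"
    using pow_generator_mem_iff[OF H, of "gen_exp H"] pow_generator_mem_iff[OF K, of "gen_exp H"] by auto
next
  assume dvd: "gen_exp K dvd gen_exp H"
  show "H \<subseteq> K"
  proof
    fix x assume x: "x \<in> H"
    then obtain k :: nat where k: "x = g [^] k"
      using subgroup.mem_carrier[OF H] carrier_eq_powers by blast
    then have "gen_exp H dvd k" using pow_generator_mem_iff[OF H] x by simp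
    then show "x \<in> K" using pow_generator_mem_iff[OF K] k dvd_trans[OF dvd] by simp
  qed
qed

lemma subgroup_eq_iff:
  assumes "subgroup H G" "subgroup K G"
  shows "H = K \<longleftrightarrow> gen_exp H = gen_exp K"
  using subgroup_subset_iff[OF assms] subgroup_subset_iff[OF assms(2,1)] by (auto intro: dvd_antisym)

definition power_subgroup :: "nat \<Rightarrow> 'a set" where
  "power_subgroup d = {g [^] k | k. d dvd k}"

lemma subgroup_power_subgroup: "subgroup (power_subgroup d) G"
proof (rule subgroupI)
  show "power_subgroup d \<subseteq> carrier G" "power_subgroup d \<noteq> {}"
    unfolding power_subgroup_def using generator_closed by auto
next
  fix x assume "x \<in> power_subgroup d"
  then obtain k where k: "x = g [^] k" "d dvd k" unfolding power_subgroup_def by blast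
  have "g [^] (k * (order G - 1)) \<otimes> g [^] k = g [^] (k * order G)"
    using generator_closed order_pos by (simp add: nat_pow_mult algebra_simps)
  also have "\<dots> = \<one>" by (simp add: pow_generator_eq_one_iff)
  finally have "inv x = g [^] (k * (order G - 1))"
    using k generator_closed by (simp add: inv_equality)
  then show "inv x \<in> power_subgroup d" unfolding power_subgroup_def using k by auto
next
  fix x y assume "x \<in> power_subgroup d" "y \<in> power_subgroup d"
  then show "x \<otimes> y \<in> power_subgroup d"
    unfolding power_subgroup_def using generator_closed by (auto simp: nat_pow_mult)
qed

lemma gen_exp_power_subgroup:
  assumes d: "d dvd order G"
  shows "gen_exp (power_subgroup d) = d"
proof (rule dvd_antisym)
  note mem_iff = pow_generator_mem_iff[OF subgroup_power_subgroup[of d]]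
  show "gen_exp (power_subgroup d) dvd d"
    using mem_iff[of d] unfolding power_subgroup_def by auto
  obtain k where k: "g [^] gen_exp (power_subgroup d) = g [^] k" "d dvd k"
    using mem_iff[of "gen_exp (power_subgroup d)"] unfolding power_subgroup_def by auto
  then have "gen_exp (power_subgroup d) mod d = k mod d"
    using d by (metis pow_generator_eq_iff mod_mod_cancel)
  then show "d dvd gen_exp (power_subgroup d)" using k(2) by (simp add: mod_eq_0_iff_dvd)
qed

lemma power_subgroup_ne_carrier:
  assumes "Factorial_Ring.prime q" "q dvd order G"
  shows "power_subgroup q \<noteq> carrier G"
  using subgroup_eq_iff[OF subgroup_power_subgroup subgroup_self] gen_exp_power_subgroup[OF assms(2)]
    gen_exp_carrier prime_gt_1_nat[OF assms(1)] by simp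

lemma power_subgroup_maximal:
  assumes q: "Factorial_Ring.prime q" "q dvd order G" and K: "subgroup K G" "power_subgroup q \<subseteq> K"
  shows "K = power_subgroup q \<or> K = carrier G"
proof -
  have "gen_exp K dvd q"
    using subgroup_subset_iff[OF subgroup_power_subgroup K(1)] K(2) gen_exp_power_subgroup[OF q(2)] by simp
  then have "gen_exp K = q \<or> gen_exp K = 1" using q(1) by (auto simp: prime_nat_iff)
  then show ?thesis
    using subgroup_eq_iff[OF K(1) subgroup_power_subgroup] subgroup_eq_iff[OF K(1) subgroup_self]
      gen_exp_power_subgroup[OF q(2)] gen_exp_carrier by auto
qed

text \<open>For squarefree order, \<open>gen_exp H\<close> is squarefree, so it divides \<open>gen_exp K\<close> as soon as all its
  prime factors do; hence a proper inclusion \<open>H \<subset> K\<close> is detected by a single prime.\<close>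

lemma power_subgroups_separate:
  assumes sf: "squarefree (order G)" and H: "subgroup H G" and K: "subgroup K G" and HK: "H \<subset> K"
  shows "\<exists>q \<in> prime_factors (order G). H \<subseteq> power_subgroup q \<and> \<not> K \<subseteq> power_subgroup q"
proof (rule ccontr)
  assume none: "\<not> ?thesis"
  have subset_iff: "L \<subseteq> power_subgroup q \<longleftrightarrow> q dvd gen_exp L"
    if "subgroup L G" "q dvd order G" for L q
    using subgroup_subset_iff[OF that(1) subgroup_power_subgroup] by (simp only: gen_exp_power_subgroup[OF that(2)])
  have "gen_exp H dvd gen_exp K"
  proof (rule squarefree_dvdI)
    show "squarefree (gen_exp H)" using gen_exp_dvd_order[OF H] sf by (rule squarefree_mono)
    show "gen_exp K \<noteq> 0" using gen_exp_pos[OF K] by simp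
    fix q :: nat assume q: "Factorial_Ring.prime q" "q dvd gen_exp H"
    have q_dvd: "q dvd order G" using q(2) gen_exp_dvd_order[OF H] by (rule dvd_trans)
    then have "q \<in> prime_factors (order G)" using order_pos q(1) by (simp add: in_prime_factors_iff)
    then have "\<not> (H \<subseteq> power_subgroup q \<and> \<not> K \<subseteq> power_subgroup q)" using none by blast
    then show "q dvd gen_exp K" using subset_iff[OF H q_dvd] subset_iff[OF K q_dvd] q(2) by simp
  qed
  moreover have "gen_exp K dvd gen_exp H" using subgroup_subset_iff[OF H K] psubset_imp_subset[OF HK] by simp
  ultimately have "H = K" using subgroup_eq_iff[OF H K] by (simp add: dvd_antisym)
  then show False using HK by simp
qed

theorem width_eq_card_prime_factors:
  assumes "squarefree (order G)"
  shows "width G = card (prime_factors (order G))"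
proof -
  let ?P = "prime_factors (order G)"
  define S\<^sub>0 where "S\<^sub>0 = (\<lambda>q. (power_subgroup q, carrier G)) ` ?P"
  have P: "Factorial_Ring.prime q" "q dvd order G" if "q \<in> ?P" for q
    using that by (simp_all add: in_prime_factors_iff)
  have "(power_subgroup q, carrier G) \<in> arrows G" for q
    using subgroup_power_subgroup[of q] subgroup.subset[OF subgroup_power_subgroup[of q]] subgroup_self
    by (simp add: arrows_def)
  then have "S\<^sub>0 \<subseteq> arrows G" unfolding S\<^sub>0_def by (rule image_subsetI)
  then have "generated_ts G S\<^sub>0 \<subseteq> arrows G" by (rule generated_ts_least[OF transfer_system_arrows])
  moreover have "arrows G \<subseteq> generated_ts G S\<^sub>0"
  proof (rule subset_generated_tsI)
    fix T assume T: "transfer_system G T" "S\<^sub>0 \<subseteq> T"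
    show "arrows G \<subseteq> T"
    proof (rule arrows_subset_transfer_system[OF finite_carrier T(1), of "power_subgroup ` ?P"])
      show "(M, carrier G) \<in> T" if "M \<in> power_subgroup ` ?P" for M
        using that T(2) unfolding S\<^sub>0_def by blast
      show "\<exists>M \<in> power_subgroup ` ?P. H \<subseteq> M \<and> \<not> K \<subseteq> M"
        if "subgroup H G" "subgroup K G" "H \<subset> K" for H K
        using power_subgroups_separate[OF assms that] by blast
    qed
  qed
  moreover have "transfer_system G (arrows G - {s})" if s: "s \<in> S\<^sub>0" for s
  proof -
    obtain q where q: "q \<in> ?P" "s = (power_subgroup q, carrier G)" using s unfolding S\<^sub>0_def by blast
    have "power_subgroup q \<lhd> G"
      using comm_group.subgroup_imp_normal[OF is_comm_group subgroup_power_subgroup] .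
    then show ?thesis unfolding q(2)
      by (rule transfer_system_arrows_Diff_maximal)
        (use power_subgroup_ne_carrier[OF P[OF q(1)]] power_subgroup_maximal[OF P[OF q(1)]] in auto)
  qed
  ultimately have "width G = card S\<^sub>0"
    unfolding width_def by (intro mgen_eq_card[OF transfer_system_arrows]) auto
  also have "\<dots> = card ?P"
    unfolding S\<^sub>0_def
  proof (rule card_image, rule inj_onI)
    fix q q' assume "q \<in> ?P" "q' \<in> ?P" "(power_subgroup q, carrier G) = (power_subgroup q', carrier G)"
    then show "q = q'" using gen_exp_power_subgroup P(2) by (metis prod.inject)
  qed
  finally show ?thesis .
qed

end

theorem lemma5p1:
  fixes G :: "('a, 'b) monoid_scheme" and p :: "nat \<Rightarrow> nat" and n :: nat
  assumes "group G"
    and "finite (carrier G)"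
    and "\<exists>g \<in> carrier G. carrier G = generate G {g}"
    and "\<forall>i < n. Factorial_Ring.prime (p i)"
    and "inj_on p {..<n}"
    and "order G = (\<Prod>i<n. p i)"
  shows "width G = n"
proof -
  obtain g where g: "g \<in> carrier G" "carrier G = generate G {g}" using assms(3) by blast
  interpret finite_cyclic_group G g
    using assms(1,2) g by (simp add: finite_cyclic_group_def finite_cyclic_group_axioms_def)
  have primes: "\<And>i. i \<in> {..<n} \<Longrightarrow> Factorial_Ring.prime (p i)" using assms(4) by blast
  have "squarefree (order G)"
    using squarefree_prod_distinct_primes[OF primes assms(5)] assms(6) by simp
  then have "width G = card (prime_factors (order G))" by (rule width_eq_card_prime_factors)
  also have "prime_factors (order G) = p ` {..<n}"
    using prime_factors_prod_distinct_primes[OF finite_lessThan primes] assms(6) by simp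
  also have "card (p ` {..<n}) = n" using card_image[OF assms(5)] by simp
  finally show ?thesis .
qed

end
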